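(* Let $n,m\in\mathbb{N}$ be coprime and $\beta\in\mathbb{C}$. Then for every $u\in S(n,\beta)$, $\hat H_{n,m}u=u|_0\sum_{A\in X_m^\star}A$.
   Context: $\Gamma_0(n)=\{\begin{pmatrix}a&b\\c&d\end{pmatrix}\in SL(2,\mathbb{Z}):n\mid c\}$; $S(n,\beta)$ is the space of Maass cusp forms for $\Gamma_0(n)$ with spectral parameter $\beta$. $(f|_0h)(z)=f(hz)$, extended linearly. $B_m=\begin{pmatrix}m&0\\0&1\end{pmatrix}$. $\{R_j^{nm,n}\}_{j\in I_{nm,n}}$ is a system of representatives of the right cosets $\Gamma_0(nm)\backslash\Gamma_0(n)$ and $\hat H_{n,m}u=(u|_0B_m)|_0\sum_jR_j^{nm,n}$. $X_m^\star=\{\begin{pmatrix}c&b\\0&m/c\end{pmatrix}:c\ge1,\ c\mid m,\ 0\le b\le m/c-1,\ \gcd(c,b,m/c)=1\}$. *)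

theory Defs
  imports "HOL-Analysis.Analysis"
begin

text \<open>Integer 2x2 matrices (a b; c d) represented as tuples (a, b, c, d).\<close>
type_synonym mat2 = "int \<times> int \<times> int \<times> int"

fun mmul :: "mat2 \<Rightarrow> mat2 \<Rightarrow> mat2" where
  "mmul (a, b, c, d) (a', b', c', d') =
     (a * a' + b * c', a * b' + b * d', c * a' + d * c', c * b' + d * d')"

fun mdet :: "mat2 \<Rightarrow> int" where
  "mdet (a, b, c, d) = a * d - b * c"

text \<open>Inverse of a determinant-one matrix.\<close>
fun minv :: "mat2 \<Rightarrow> mat2" where
  "minv (a, b, c, d) = (d, - b, - c, a)"

definition SL2Z :: "mat2 set" where
  "SL2Z = {A. mdet A = 1}"

definition Gamma0 :: "nat \<Rightarrow> mat2 set" where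
  "Gamma0 N = {(a, b, c, d). a * d - b * c = 1 \<and> int N dvd c}"

fun mob :: "mat2 \<Rightarrow> complex \<Rightarrow> complex" where
  "mob (a, b, c, d) z = (of_int a * z + of_int b) / (of_int c * z + of_int d)"

text \<open>Weight-0 slash action  (f|_0 h)(z) = f(h z), and its linear extension to
  a formal sum (finite set) of matrices.\<close>
definition slash0 :: "(complex \<Rightarrow> complex) \<Rightarrow> mat2 \<Rightarrow> (complex \<Rightarrow> complex)" where
  "slash0 f h = (\<lambda>z. f (mob h z))"

definition slash_sum :: "(complex \<Rightarrow> complex) \<Rightarrow> mat2 set \<Rightarrow> (complex \<Rightarrow> complex)" where
  "slash_sum f S = (\<lambda>z. \<Sum>h\<in>S. f (mob h z))"

definition Bmat :: "nat \<Rightarrow> mat2" where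
  "Bmat m = (int m, 0, 0, 1)"

text \<open>Rs is a system of representatives of the right cosets
  Gamma0(M) \<setminus> Gamma0(N):  every element of Gamma0(N) lies in Gamma0(M) r for exactly one r in Rs.\<close>
definition coset_reps :: "nat \<Rightarrow> nat \<Rightarrow> mat2 set \<Rightarrow> bool" where
  "coset_reps M N Rs \<longleftrightarrow> Rs \<subseteq> Gamma0 N \<and>
     (\<forall>g\<in>Gamma0 N. \<exists>!r\<in>Rs. mmul g (minv r) \<in> Gamma0 M)"

definition hatH :: "nat \<Rightarrow> nat \<Rightarrow> mat2 set \<Rightarrow> (complex \<Rightarrow> complex) \<Rightarrow> (complex \<Rightarrow> complex)" where
  "hatH n m Rs u = slash_sum (slash0 u (Bmat m)) Rs"

definition Xstar :: "nat \<Rightarrow> mat2 set" where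
  "Xstar m = {(c, b, 0, int m div c) | c b.
      c \<ge> 1 \<and> c dvd int m \<and> 0 \<le> b \<and> b \<le> int m div c - 1 \<and>
      gcd c (gcd b (int m div c)) = 1}"

definition dx :: "(complex \<Rightarrow> complex) \<Rightarrow> complex \<Rightarrow> complex" where
  "dx f z = vector_derivative (\<lambda>t::real. f (z + of_real t)) (at 0)"

definition dy :: "(complex \<Rightarrow> complex) \<Rightarrow> complex \<Rightarrow> complex" where
  "dy f z = vector_derivative (\<lambda>t::real. f (z + \<i> * of_real t)) (at 0)"

fun dw :: "bool list \<Rightarrow> (complex \<Rightarrow> complex) \<Rightarrow> complex \<Rightarrow> complex" where
  "dw [] f = f"
| "dw (b # bs) f = (if b then dx (dw bs f) else dy (dw bs f))"

text \<open>C-infinity on the upper half plane (as a function of the two real variables).\<close>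
definition smooth_H :: "(complex \<Rightarrow> complex) \<Rightarrow> bool" where
  "smooth_H u \<longleftrightarrow> (\<forall>bs z. Im z > 0 \<longrightarrow> dw bs u differentiable (at z))"

text \<open>Maass cusp forms for Gamma0(n) with spectral parameter beta:
  smooth, Gamma0(n)-invariant, eigenfunction of the hyperbolic Laplacian
  -y^2(d_x^2+d_y^2) with eigenvalue 1/4 - beta^2, of moderate growth at every cusp,
  and with vanishing constant term at every cusp.\<close>
definition S :: "nat \<Rightarrow> complex \<Rightarrow> (complex \<Rightarrow> complex) set" where
  "S n \<beta> = {u. smooth_H u \<and>
     (\<forall>g\<in>Gamma0 n. \<forall>z. Im z > 0 \<longrightarrow> u (mob g z) = u z) \<and>
     (\<forall>z. Im z > 0 \<longrightarrow>
        - (complex_of_real ((Im z)\<^sup>2)) * (dx (dx u) z + dy (dy u) z) = (1/4 - \<beta>\<^sup>2) * u z) \<and>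
     (\<forall>\<sigma>\<in>SL2Z. \<exists>C K. \<forall>z. Im z \<ge> 1 \<longrightarrow> norm (u (mob \<sigma> z)) \<le> C * (Im z) powr K) \<and>
     (\<forall>\<sigma>\<in>SL2Z. \<forall>y>0. integral {0..real n} (\<lambda>x. u (mob \<sigma> (Complex x y))) = 0)}"

end

theory Submission
  imports Defs "HOL-Computational_Algebra.Primes"
begin

text \<open>Left multiplication by \<open>\<Gamma>\<^sub>0(n)\<close> acts on integer matrices of determinant \<open>m\<close>.
  Every orbit of a matrix \<open>B\<^sub>m r\<close> with \<open>r \<in> \<Gamma>\<^sub>0(n)\<close> contains exactly one matrix of \<open>X\<^sub>m\<^sup>\<star>\<close>
  (a Hermite normal form whose bottom row stays primitive), so \<open>u|B\<^sub>m r = u|T(r)\<close> for this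
  representative \<open>T(r)\<close> by \<open>\<Gamma>\<^sub>0(n)\<close>-invariance of \<open>u\<close>. The map \<open>r \<mapsto> T(r)\<close> is a bijection from the
  coset representatives onto \<open>X\<^sub>m\<^sup>\<star>\<close>: the orbits of \<open>B\<^sub>m r\<close> and \<open>B\<^sub>m r'\<close> coincide exactly when
  \<open>r' r\<^sup>-\<^sup>1 \<in> \<Gamma>\<^sub>0(nm)\<close>, and, as \<open>n\<close> and \<open>m\<close> are coprime, every element of \<open>X\<^sub>m\<^sup>\<star>\<close> lies in
  \<open>\<Gamma>\<^sub>0(n) B\<^sub>m \<Gamma>\<^sub>0(n)\<close>.\<close>

lemma mmul_assoc: "mmul (mmul x y) w = mmul x (mmul y w)"
  by (cases x rule: prod_cases4; cases y rule: prod_cases4; cases w rule: prod_cases4)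
     (simp add: algebra_simps)

lemma mdet_mmul: "mdet (mmul x y) = mdet x * mdet y"
  by (cases x rule: prod_cases4; cases y rule: prod_cases4) (simp add: algebra_simps)

lemma mmul_minv_left: "mdet g = 1 \<Longrightarrow> mmul (minv g) (mmul g x) = x"
  by (cases x rule: prod_cases4; cases g rule: prod_cases4) (simp add: algebra_simps)

lemma mmul_minv_right: "mdet g = 1 \<Longrightarrow> mmul (mmul x (minv g)) g = x"
  by (cases x rule: prod_cases4; cases g rule: prod_cases4) (simp add: algebra_simps)

lemma mmul_minv_cancel: "mdet g = 1 \<Longrightarrow> mmul (mmul x g) (minv g) = x"
  by (cases x rule: prod_cases4; cases g rule: prod_cases4) (simp add: algebra_simps)

lemma mmul_minv_self: "mdet g = 1 \<Longrightarrow> mmul g (minv g) = (1, 0, 0, 1)"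
  by (cases g rule: prod_cases4) (simp add: algebra_simps)

lemma Gamma0_det: "g \<in> Gamma0 N \<Longrightarrow> mdet g = 1"
  by (cases g rule: prod_cases4) (simp add: Gamma0_def)

lemma Gamma0_one: "(1, 0, 0, 1) \<in> Gamma0 N"
  by (simp add: Gamma0_def)

lemma Gamma0_mmul: "g \<in> Gamma0 N \<Longrightarrow> h \<in> Gamma0 N \<Longrightarrow> mmul g h \<in> Gamma0 N"
  using mdet_mmul[of g h]
  by (cases g rule: prod_cases4; cases h rule: prod_cases4) (auto simp: Gamma0_def algebra_simps)

lemma Gamma0_minv: "g \<in> Gamma0 N \<Longrightarrow> minv g \<in> Gamma0 N"
  by (cases g rule: prod_cases4) (auto simp: Gamma0_def algebra_simps)

definition Gamma0_equiv :: "nat \<Rightarrow> mat2 \<Rightarrow> mat2 \<Rightarrow> bool" where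
  "Gamma0_equiv n A B \<longleftrightarrow> (\<exists>\<gamma>\<in>Gamma0 n. mmul \<gamma> A = B)"

lemma Gamma0_equivI: "\<gamma> \<in> Gamma0 n \<Longrightarrow> mmul \<gamma> A = B \<Longrightarrow> Gamma0_equiv n A B"
  unfolding Gamma0_equiv_def by blast

lemma Gamma0_equiv_sym:
  assumes "Gamma0_equiv n A B"
  shows "Gamma0_equiv n B A"
proof -
  obtain \<gamma> where "\<gamma> \<in> Gamma0 n" "mmul \<gamma> A = B"
    using assms by (auto simp: Gamma0_equiv_def)
  then show ?thesis
    by (intro Gamma0_equivI[of "minv \<gamma>"]) (auto simp: Gamma0_minv Gamma0_det mmul_minv_left)
qed

lemma Gamma0_equiv_trans:
  assumes "Gamma0_equiv n A B" "Gamma0_equiv n B C"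
  shows "Gamma0_equiv n A C"
proof -
  obtain \<gamma> \<delta> where "\<gamma> \<in> Gamma0 n" "mmul \<gamma> A = B" "\<delta> \<in> Gamma0 n" "mmul \<delta> B = C"
    using assms by (auto simp: Gamma0_equiv_def)
  then show ?thesis
    by (intro Gamma0_equivI[of "mmul \<delta> \<gamma>"]) (auto simp: Gamma0_mmul mmul_assoc)
qed

lemma Gamma0_equiv_mdet: "Gamma0_equiv n A B \<Longrightarrow> mdet B = mdet A"
  by (auto simp: Gamma0_equiv_def mdet_mmul dest: Gamma0_det)

lemma Gamma0_equiv_translate: "Gamma0_equiv n (a, b, 0, d) (a, b + k * d, 0, d)"
  by (rule Gamma0_equivI[of "(1, k, 0, 1)"]) (simp_all add: Gamma0_def)

lemma mob_mmul:
  assumes "mdet B \<noteq> 0" "Im z > 0"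
  shows "mob (mmul A B) z = mob A (mob B z)"
proof (cases A rule: prod_cases4; cases B rule: prod_cases4)
  fix a' b' c' d' a b c d
  assume A: "A = (a', b', c', d')" and B: "B = (a, b, c, d)"
  define D where "D = of_int c * z + of_int d"
  define N where "N = of_int a * z + of_int b"
  have "D \<noteq> 0"
  proof
    assume "D = 0"
    then have "c = 0" "d = 0"
      using assms(2) by (auto simp: D_def complex_eq_iff)
    then show False
      using assms(1) by (simp add: B)
  qed
  then have "mob A (mob B z) = (of_int a' * (N / D) + of_int b') / (of_int c' * (N / D) + of_int d')"
    by (simp add: A B N_def D_def)
  also have "\<dots> = ((of_int a' * N + of_int b' * D) / D) / ((of_int c' * N + of_int d' * D) / D)"
    using \<open>D \<noteq> 0\<close> by (simp add: divide_add_eq_iff mult.commute)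
  also have "\<dots> = (of_int a' * N + of_int b' * D) / (of_int c' * N + of_int d' * D)"
    using \<open>D \<noteq> 0\<close> by simp
  also have "\<dots> = mob (mmul A B) z"
    by (simp add: A B N_def D_def algebra_simps)
  finally show ?thesis by simp
qed

lemma Im_mob_pos:
  assumes "mdet M > 0" "Im z > 0"
  shows "Im (mob M z) > 0"
proof (cases M rule: prod_cases4)
  case (fields a b c d)
  define w where "w = of_int c * z + of_int d"
  have "w \<noteq> 0"
    using assms by (auto simp: w_def fields complex_eq_iff)
  then have "(Re w)\<^sup>2 + (Im w)\<^sup>2 > 0"
    by (simp add: sum_power2_gt_zero_iff complex_eq_iff)
  moreover have "Im (mob M z) = of_int (mdet M) * Im z / ((Re w)\<^sup>2 + (Im w)\<^sup>2)"
    by (simp add: fields w_def Im_divide power2_eq_square algebra_simps)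
  ultimately show ?thesis
    using assms by simp
qed

lemma Gamma0_invariant_equiv:
  assumes inv: "\<forall>g\<in>Gamma0 n. \<forall>z. Im z > 0 \<longrightarrow> u (mob g z) = u z"
    and "Gamma0_equiv n A T" "mdet A > 0" "Im z > 0"
  shows "u (mob T z) = u (mob A z)"
proof -
  obtain \<gamma> where "\<gamma> \<in> Gamma0 n" "mmul \<gamma> A = T"
    using assms(2) by (auto simp: Gamma0_equiv_def)
  moreover have "Im (mob A z) > 0"
    using assms(3,4) by (rule Im_mob_pos)
  ultimately show ?thesis
    using inv assms(3,4) by (auto simp: mob_mmul)
qed

lemma Xstar_iff:
  "(a, b, c, d) \<in> Xstar m \<longleftrightarrow>
     c = 0 \<and> a \<ge> 1 \<and> a * d = int m \<and> 0 \<le> b \<and> b < d \<and> gcd a (gcd b d) = 1"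
proof
  assume "(a, b, c, d) \<in> Xstar m"
  then show "c = 0 \<and> a \<ge> 1 \<and> a * d = int m \<and> 0 \<le> b \<and> b < d \<and> gcd a (gcd b d) = 1"
    by (auto simp: Xstar_def)
next
  assume T: "c = 0 \<and> a \<ge> 1 \<and> a * d = int m \<and> 0 \<le> b \<and> b < d \<and> gcd a (gcd b d) = 1"
  then have "int m div a = d"
    by (metis nonzero_mult_div_cancel_left not_one_le_zero)
  moreover have "a dvd int m"
    using T by (metis dvd_triv_left)
  ultimately show "(a, b, c, d) \<in> Xstar m"
    using T unfolding Xstar_def by (auto intro!: exI[of _ a] exI[of _ b])
qed

lemma Xstar_unique:
  assumes "mdet \<delta> = 1" "T \<in> Xstar m" "T' \<in> Xstar m" "mmul \<delta> T = T'"
  shows "T = T'"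
proof -
  obtain a b d where T: "T = (a, b, 0, d)" "a \<ge> 1" "0 \<le> b" "b < d"
    using assms(2) by (cases T rule: prod_cases4) (auto simp: Xstar_iff)
  obtain a' b' d' where T': "T' = (a', b', 0, d')" "a' \<ge> 1" "0 \<le> b'" "b' < d'"
    using assms(3) by (cases T' rule: prod_cases4) (auto simp: Xstar_iff)
  obtain p q s t where \<delta>: "\<delta> = (p, q, s, t)"
    by (cases \<delta> rule: prod_cases4)
  have eq: "p * a = a'" "p * b + q * d = b'" "s * a = 0" "s * b + t * d = d'"
    using assms(4) by (simp_all add: T T' \<delta>)
  have "s = 0"
    using eq(3) T(2) by simp
  have "p * a > 0"
    using eq(1) T'(2) by simp
  then have "p > 0"
    using T(2) by (simp add: zero_less_mult_iff)
  moreover have "p * t = 1"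
    using assms(1) \<open>s = 0\<close> by (simp add: \<delta>)
  ultimately have "p = 1" "t = 1"
    by (simp_all add: pos_zmult_eq_1_iff)
  then have "a' = a" "d' = d" "b' = b + q * d"
    using eq \<open>s = 0\<close> by simp_all
  then have "b' mod d = b mod d"
    by simp
  then have "b' = b"
    using T T' \<open>d' = d\<close> by simp
  with \<open>a' = a\<close> \<open>d' = d\<close> show ?thesis
    by (simp add: T T')
qed

lemma exists_coprime_divisor_absorbing_primes:
  fixes b d :: int
  assumes "d \<noteq> 0"
  obtains k where "k dvd d" "coprime k b"
    and "\<And>p. prime p \<Longrightarrow> p dvd d \<Longrightarrow> \<not> p dvd b \<Longrightarrow> p dvd k"
proof -
  define K where "K = {k. k dvd d \<and> k > 0 \<and> coprime k b}"
  have "finite K"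
    by (rule finite_subset[of _ "{1..\<bar>d\<bar>}"])
       (auto simp: K_def dest: dvd_imp_le_int[OF \<open>d \<noteq> 0\<close>])
  have "1 \<in> K"
    by (simp add: K_def)
  define k where "k = Max K"
  have k: "k \<in> K" and k_max: "\<And>k'. k' \<in> K \<Longrightarrow> k' \<le> k"
    using \<open>finite K\<close> \<open>1 \<in> K\<close> by (auto simp: k_def intro!: Max_in Max_ge)
  have "p dvd k" if "prime p" "p dvd d" "\<not> p dvd b" for p
  proof (rule ccontr)
    assume "\<not> p dvd k"
    then have "p * k \<in> K"
      using k that by (auto simp: K_def prime_imp_coprime divides_mult prime_gt_0_int)
    then have "p * k \<le> k"
      by (rule k_max)
    moreover have "p \<ge> 2" "k > 0"
      using k \<open>prime p\<close> prime_ge_2_int by (auto simp: K_def)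
    ultimately show False
      by simp
  qed
  with k show ?thesis
    using that unfolding K_def by blast
qed

lemma exists_coprime_shift:
  fixes a b d :: int
  assumes "d \<noteq> 0" and "gcd a (gcd b d) = 1"
  shows "\<exists>k. coprime (b + k * a) d"
proof -
  obtain k where "k dvd d" "coprime k b"
    and prime_dvd_k: "\<And>p. prime p \<Longrightarrow> p dvd d \<Longrightarrow> \<not> p dvd b \<Longrightarrow> p dvd k"
    using exists_coprime_divisor_absorbing_primes[OF \<open>d \<noteq> 0\<close>] by blast
  have "coprime (b + k * a) d"
  proof (rule ccontr)
    assume "\<not> coprime (b + k * a) d"
    then have "\<bar>gcd (b + k * a) d\<bar> \<noteq> 1"
      by (simp add: coprime_iff_gcd_eq_1)
    then obtain p where p: "prime p" "p dvd gcd (b + k * a) d"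
      by (rule prime_factor_int)
    then have "p dvd b + k * a" "p dvd d"
      by auto
    show False
    proof (cases "p dvd b")
      case True
      then have "p dvd k * a"
        using \<open>p dvd b + k * a\<close> by (simp add: dvd_add_right_iff)
      moreover have "\<not> p dvd a"
        using True \<open>p dvd d\<close> assms(2) p(1) by (metis gcd_greatest not_prime_unit)
      moreover have "\<not> p dvd k"
        using True \<open>coprime k b\<close> p(1) by (auto dest: coprime_common_divisor not_prime_unit)
      ultimately show False
        using p(1) by (simp add: prime_dvd_mult_iff)
    next
      case False
      then have "p dvd k * a"
        using prime_dvd_k[OF p(1) \<open>p dvd d\<close>] by simp
      then show False
        using False \<open>p dvd b + k * a\<close> by (simp add: dvd_add_left_iff)
    qed
  qed
  then show ?thesis
    by blast
qed

lemma Gamma0_triangularize: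
  fixes A B C D :: int
  assumes det: "A * D - B * C = int m" and "m \<ge> 1" and "int n dvd C" and "coprime n m"
  shows "\<exists>a b d. a \<ge> 1 \<and> Gamma0_equiv n (A, B, C, D) (a, b, 0, d)"
proof -
  define g where "g = gcd A C"
  define A' where "A' = A div g"
  define C' where "C' = C div g"
  have A: "A = g * A'" and C: "C = g * C'"
    by (simp_all add: g_def A'_def C'_def)
  have "A \<noteq> 0 \<or> C \<noteq> 0"
    using det \<open>m \<ge> 1\<close> by auto
  then have "g \<ge> 1" and "coprime A' C'"
    unfolding g_def A'_def C'_def using div_gcd_coprime by (auto simp: int_one_le_iff_zero_less)
  have "g dvd A * D - B * C"
    unfolding g_def by (intro dvd_diff dvd_mult2 dvd_mult gcd_dvd1 gcd_dvd2)
  then have "coprime (int n) g"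
    using \<open>coprime n m\<close> det by (auto intro: coprime_divisors[OF dvd_refl])
  then have "int n dvd C'"
    using \<open>int n dvd C\<close> by (simp add: C coprime_dvd_mult_right_iff)
  obtain u v where uv: "u * A' + v * C' = 1"
    using bezout_int[of A' C'] \<open>coprime A' C'\<close> by (auto simp: coprime_iff_gcd_eq_1)
  have \<gamma>: "(u, v, - C', A') \<in> Gamma0 n"
    using uv \<open>int n dvd C'\<close> by (simp add: Gamma0_def)
  have "u * A + v * C = g * (u * A' + v * C')" and "C' * A = A' * C"
    by (simp_all add: A C algebra_simps)
  then have "mmul (u, v, - C', A') (A, B, C, D) = (g, u * B + v * D, 0, A' * D - C' * B)"
    using uv by simp
  with \<gamma> \<open>g \<ge> 1\<close> show ?thesis
    by (blast intro: Gamma0_equivI)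
qed

lemma Xstar_complete:
  fixes A B C D :: int
  assumes "A * D - B * C = int m" "m \<ge> 1" "int n dvd C" "coprime n m" "coprime C D"
  shows "\<exists>T\<in>Xstar m. Gamma0_equiv n (A, B, C, D) T"
proof -
  obtain a b d where "a \<ge> 1" and tri: "Gamma0_equiv n (A, B, C, D) (a, b, 0, d)"
    using Gamma0_triangularize[OF assms(1-4)] by blast
  have "a * d = int m"
    using Gamma0_equiv_mdet[OF tri] assms(1) by simp
  then have "d > 0"
    using \<open>a \<ge> 1\<close> \<open>m \<ge> 1\<close> by (intro zero_less_mult_pos[of a d]) simp_all
  define T :: mat2 where "T = (a, b mod d, 0, d)"
  have "b + - (b div d) * d = b mod d"
    by (simp add: minus_div_mult_eq_mod[symmetric])
  then have "Gamma0_equiv n (A, B, C, D) T"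
    using Gamma0_equiv_trans[OF tri Gamma0_equiv_translate[where k = "- (b div d)"]]
    by (simp add: T_def)
  then obtain p q s t where "(p, q, s, t) \<in> Gamma0 n" "mmul (p, q, s, t) T = (A, B, C, D)"
    by (metis Gamma0_equiv_def Gamma0_equiv_sym prod_cases4)
  then have "C = s * a" "D = s * (b mod d) + t * d"
    by (simp_all add: T_def)
  define h where "h = gcd a (gcd (b mod d) d)"
  have "h dvd a" "h dvd b mod d" "h dvd d"
    unfolding h_def by (meson dvd_trans gcd_dvd1 gcd_dvd2)+
  then have "h dvd C" "h dvd D"
    using \<open>C = s * a\<close> \<open>D = s * (b mod d) + t * d\<close> by simp_all
  then have "is_unit h"
    using \<open>coprime C D\<close> by (rule coprime_common_divisor[rotated])
  then have "gcd a (gcd (b mod d) d) = 1"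
    by (simp add: h_def)
  then have "T \<in> Xstar m"
    using \<open>a \<ge> 1\<close> \<open>a * d = int m\<close> \<open>d > 0\<close> by (simp add: T_def Xstar_iff)
  with \<open>Gamma0_equiv n (A, B, C, D) T\<close> show ?thesis
    by blast
qed

text \<open>Unspecified when the \<open>\<Gamma>\<^sub>0(n)\<close>-orbit of \<open>A\<close> does not meet \<open>X\<^sub>m\<^sup>\<star>\<close>.\<close>

definition Xstar_rep :: "nat \<Rightarrow> nat \<Rightarrow> mat2 \<Rightarrow> mat2" where
  "Xstar_rep n m A = (THE T. T \<in> Xstar m \<and> Gamma0_equiv n A T)"

lemma Xstar_rep_eqI:
  assumes "T \<in> Xstar m" "Gamma0_equiv n A T"
  shows "Xstar_rep n m A = T"
  unfolding Xstar_rep_def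
proof (rule the1_equality)
  show "\<exists>!T. T \<in> Xstar m \<and> Gamma0_equiv n A T"
  proof (rule ex1I)
    fix T' assume T': "T' \<in> Xstar m \<and> Gamma0_equiv n A T'"
    then have "Gamma0_equiv n T T'"
      using Gamma0_equiv_trans[OF Gamma0_equiv_sym[OF assms(2)]] by blast
    then obtain \<gamma> where "\<gamma> \<in> Gamma0 n" "mmul \<gamma> T = T'"
      by (auto simp: Gamma0_equiv_def)
    then show "T' = T"
      using Xstar_unique[of \<gamma> T m T'] assms(1) T' by (simp add: Gamma0_det)
  qed (use assms in blast)
qed (use assms in blast)

lemma Xstar_rep_Bmat:
  assumes "r \<in> Gamma0 n" "coprime n m" "m \<ge> 1"
  shows "Xstar_rep n m (mmul (Bmat m) r) \<in> Xstar m"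
    and "Gamma0_equiv n (mmul (Bmat m) r) (Xstar_rep n m (mmul (Bmat m) r))"
proof -
  obtain a b c d where r: "r = (a, b, c, d)"
    by (cases r rule: prod_cases4)
  have det: "a * d - b * c = 1" and "int n dvd c"
    using assms(1) by (simp_all add: r Gamma0_def)
  have "(int m * a) * d - (int m * b) * c = int m * (a * d - b * c)"
    by (simp add: algebra_simps)
  then have "(int m * a) * d - (int m * b) * c = int m"
    using det by simp
  moreover have "coprime c d"
  proof (rule coprimeI)
    fix k assume "k dvd c" "k dvd d"
    then have "k dvd a * d - b * c"
      by (simp add: dvd_diff)
    then show "is_unit k"
      using det by simp
  qed
  ultimately obtain T where "T \<in> Xstar m" "Gamma0_equiv n (int m * a, int m * b, c, d) T"
    using Xstar_complete \<open>int n dvd c\<close> assms(2,3) by blast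
  moreover have "mmul (Bmat m) r = (int m * a, int m * b, c, d)"
    by (simp add: r Bmat_def)
  ultimately show "Xstar_rep n m (mmul (Bmat m) r) \<in> Xstar m"
    and "Gamma0_equiv n (mmul (Bmat m) r) (Xstar_rep n m (mmul (Bmat m) r))"
    by (simp_all add: Xstar_rep_eqI)
qed

lemma Xstar_in_double_coset:
  assumes "T \<in> Xstar m" "coprime n m"
  shows "\<exists>g\<in>Gamma0 n. Gamma0_equiv n (mmul (Bmat m) g) T"
proof -
  obtain a b d where T: "T = (a, b, 0, d)" and "a \<ge> 1" "a * d = int m" "0 \<le> b" "b < d"
    and "gcd a (gcd b d) = 1"
    using assms(1) by (cases T rule: prod_cases4) (auto simp: Xstar_iff)
  have "d \<noteq> 0"
    using \<open>0 \<le> b\<close> \<open>b < d\<close> by simp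
  then obtain k where "coprime (b + k * a) d"
    using exists_coprime_shift[OF _ \<open>gcd a (gcd b d) = 1\<close>] by blast
  define q where "q = - (b + k * a)"
  have "coprime (int n) (a * d)"
    using assms(2) \<open>a * d = int m\<close> by simp
  then have "coprime d (int n)"
    by (simp add: coprime_commute)
  moreover have "coprime d q"
    using \<open>coprime (b + k * a) d\<close> unfolding q_def coprime_minus_right_iff
    by (simp add: coprime_commute)
  ultimately have "coprime d (q * int n)"
    by simp
  then obtain x y where xy: "x * d + y * (q * int n) = 1"
    using bezout_int[of d "q * int n"] by (auto simp: coprime_iff_gcd_eq_1)
  define s where "s = - (y * int n)"
  \<comment> \<open>Bezout completes \<open>(d, q)\<close> to a matrix \<open>\<gamma>\<close> of \<open>\<Gamma>\<^sub>0(n)\<close>; as \<open>q \<equiv> -b (mod a)\<close>, the first row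
    \<open>(m, d (b + q))\<close> of \<open>\<gamma> T\<close> is divisible by \<open>m\<close>, so \<open>\<gamma> T = B\<^sub>m g\<close>\<close>
  define \<gamma> :: mat2 where "\<gamma> = (d, q, s, x)"
  define g :: mat2 where "g = (1, - k, s * a, s * b + x * d)"
  have "\<gamma> \<in> Gamma0 n"
    using xy by (simp add: \<gamma>_def s_def Gamma0_def algebra_simps)
  moreover have "g \<in> Gamma0 n"
  proof -
    have "s * b + x * d + k * (s * a) = x * d - s * q"
      by (simp add: q_def algebra_simps)
    also have "\<dots> = 1"
      using xy by (simp add: s_def algebra_simps)
    finally show ?thesis
      by (simp add: g_def Gamma0_def s_def algebra_simps)
  qed
  moreover have "mmul \<gamma> T = mmul (Bmat m) g"
  proof -
    have "d * b + q * d = - k * int m"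
      by (simp add: q_def \<open>a * d = int m\<close>[symmetric] algebra_simps)
    then show ?thesis
      using \<open>a * d = int m\<close> by (simp add: \<gamma>_def T g_def Bmat_def algebra_simps)
  qed
  ultimately show ?thesis
    by (blast intro: Gamma0_equivI Gamma0_equiv_sym)
qed

lemma Gamma0_equiv_Bmat_iff:
  assumes "r \<in> Gamma0 n" "r' \<in> Gamma0 n"
  shows "Gamma0_equiv n (mmul (Bmat m) r) (mmul (Bmat m) r') \<longleftrightarrow> mmul r' (minv r) \<in> Gamma0 (n * m)"
proof
  assume "Gamma0_equiv n (mmul (Bmat m) r) (mmul (Bmat m) r')"
  then obtain p q s t where "(p, q, s, t) \<in> Gamma0 n"
    and \<delta>: "mmul (p, q, s, t) (mmul (Bmat m) r) = mmul (Bmat m) r'"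
    by (metis Gamma0_equiv_def prod_cases4)
  obtain a b c d where h: "mmul r' (minv r) = (a, b, c, d)"
    by (cases "mmul r' (minv r)" rule: prod_cases4)
  have "mmul (p, q, s, t) (Bmat m) = mmul (mmul (mmul (p, q, s, t) (Bmat m)) r) (minv r)"
    using Gamma0_det[OF assms(1)] by (simp add: mmul_minv_cancel)
  also have "\<dots> = mmul (mmul (Bmat m) r') (minv r)"
    by (simp add: mmul_assoc \<delta>)
  also have "\<dots> = mmul (Bmat m) (a, b, c, d)"
    by (simp add: mmul_assoc h)
  finally have "c = s * int m"
    by (simp add: Bmat_def)
  moreover have "int n dvd s"
    using \<open>(p, q, s, t) \<in> Gamma0 n\<close> by (simp add: Gamma0_def)
  moreover have "mmul r' (minv r) \<in> Gamma0 n"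
    using assms by (simp add: Gamma0_mmul Gamma0_minv)
  ultimately show "mmul r' (minv r) \<in> Gamma0 (n * m)"
    by (simp add: h Gamma0_def mult_dvd_mono)
next
  assume "mmul r' (minv r) \<in> Gamma0 (n * m)"
  moreover obtain a b c d where h: "mmul r' (minv r) = (a, b, c, d)"
    by (cases "mmul r' (minv r)" rule: prod_cases4)
  ultimately obtain c' where det: "a * d - b * c = 1" and c: "c = int n * int m * c'"
    by (auto simp: Gamma0_def)
  \<comment> \<open>\<open>h' = B\<^sub>m (r' r\<^sup>-\<^sup>1) B\<^sub>m\<^sup>-\<^sup>1\<close>, integral since \<open>m\<close> divides \<open>c\<close>\<close>
  define h' where "h' = (a, int m * b, int n * c', d)"
  have "h' \<in> Gamma0 n"
    using det by (simp add: h'_def Gamma0_def c algebra_simps)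
  have "mmul (Bmat m) r' = mmul (Bmat m) (mmul (mmul r' (minv r)) r)"
    using Gamma0_det[OF assms(1)] by (simp add: mmul_minv_right)
  also have "\<dots> = mmul h' (mmul (Bmat m) r)"
    by (simp add: h h'_def Bmat_def c algebra_simps flip: mmul_assoc)
  finally show "Gamma0_equiv n (mmul (Bmat m) r) (mmul (Bmat m) r')"
    using \<open>h' \<in> Gamma0 n\<close> by (simp add: Gamma0_equivI)
qed

lemma coset_reps_eqI:
  assumes "coset_reps M N Rs" "r \<in> Rs" "r' \<in> Rs" "mmul r' (minv r) \<in> Gamma0 M"
  shows "r = r'"
proof -
  have "r' \<in> Gamma0 N"
    using assms(1,3) by (auto simp: coset_reps_def)
  then have "\<exists>!r''\<in>Rs. mmul r' (minv r'') \<in> Gamma0 M"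
    using assms(1) by (simp add: coset_reps_def)
  moreover have "mmul r' (minv r') \<in> Gamma0 M"
    using Gamma0_det[OF \<open>r' \<in> Gamma0 N\<close>] by (simp add: mmul_minv_self Gamma0_one)
  ultimately show ?thesis
    using assms(2-4) by blast
qed

lemma bij_betw_Xstar_rep:
  assumes "coset_reps (n * m) n Rs" "coprime n m" "m \<ge> 1"
  shows "bij_betw (\<lambda>r. Xstar_rep n m (mmul (Bmat m) r)) Rs (Xstar m)"
proof (rule bij_betw_imageI)
  have Rs: "Rs \<subseteq> Gamma0 n"
    using assms(1) by (simp add: coset_reps_def)
  note rep = Xstar_rep_Bmat[OF _ assms(2,3)]
  show "inj_on (\<lambda>r. Xstar_rep n m (mmul (Bmat m) r)) Rs"
  proof (rule inj_onI)
    fix r r' assume "r \<in> Rs" "r' \<in> Rs"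
      and eq: "Xstar_rep n m (mmul (Bmat m) r) = Xstar_rep n m (mmul (Bmat m) r')"
    then have "Gamma0_equiv n (mmul (Bmat m) r) (mmul (Bmat m) r')"
      using rep(2)[of r] rep(2)[of r'] Rs by (metis Gamma0_equiv_sym Gamma0_equiv_trans subsetD)
    then have "mmul r' (minv r) \<in> Gamma0 (n * m)"
      using Gamma0_equiv_Bmat_iff \<open>r \<in> Rs\<close> \<open>r' \<in> Rs\<close> Rs by blast
    then show "r = r'"
      using coset_reps_eqI[OF assms(1) \<open>r \<in> Rs\<close> \<open>r' \<in> Rs\<close>] by blast
  qed
  show "(\<lambda>r. Xstar_rep n m (mmul (Bmat m) r)) ` Rs = Xstar m"
  proof
    show "(\<lambda>r. Xstar_rep n m (mmul (Bmat m) r)) ` Rs \<subseteq> Xstar m"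
      using rep(1) Rs by blast
    show "Xstar m \<subseteq> (\<lambda>r. Xstar_rep n m (mmul (Bmat m) r)) ` Rs"
    proof
      fix T assume "T \<in> Xstar m"
      then obtain g where "g \<in> Gamma0 n" and g: "Gamma0_equiv n (mmul (Bmat m) g) T"
        using Xstar_in_double_coset assms(2) by blast
      then obtain r where "r \<in> Rs" "mmul g (minv r) \<in> Gamma0 (n * m)"
        using assms(1) by (auto simp: coset_reps_def)
      then have "Gamma0_equiv n (mmul (Bmat m) r) (mmul (Bmat m) g)"
        using Gamma0_equiv_Bmat_iff \<open>g \<in> Gamma0 n\<close> Rs by blast
      then have "Xstar_rep n m (mmul (Bmat m) r) = T"
        using Xstar_rep_eqI \<open>T \<in> Xstar m\<close> g Gamma0_equiv_trans by blast
      then show "T \<in> (\<lambda>r. Xstar_rep n m (mmul (Bmat m) r)) ` Rs"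
        using \<open>r \<in> Rs\<close> by blast
    qed
  qed
qed

theorem mainTheorem4:
  fixes n m :: nat and \<beta> :: complex and u :: "complex \<Rightarrow> complex" and Rs :: "mat2 set"
  assumes "n \<ge> 1" and "m \<ge> 1" and "coprime n m"
    and "u \<in> S n \<beta>"
    and "coset_reps (n * m) n Rs"
  shows "\<forall>z. Im z > 0 \<longrightarrow> hatH n m Rs u z = slash_sum u (Xstar m) z"
proof (intro allI impI)
  fix z :: complex assume "Im z > 0"
  have inv: "\<forall>g\<in>Gamma0 n. \<forall>z. Im z > 0 \<longrightarrow> u (mob g z) = u z"
    using assms(4) by (simp add: S_def)
  have Rs: "Rs \<subseteq> Gamma0 n"
    using assms(5) by (simp add: coset_reps_def)
  have mdet_Bmat_r: "mdet (mmul (Bmat m) r) > 0" if "r \<in> Rs" for r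
    using Gamma0_det[of r n] that Rs assms(2) by (auto simp: mdet_mmul Bmat_def)
  have "mob (mmul (Bmat m) r) z = mob (Bmat m) (mob r z)" if "r \<in> Rs" for r
    using Gamma0_det[of r n] that Rs \<open>Im z > 0\<close> by (simp add: mob_mmul subsetD)
  then have "hatH n m Rs u z = (\<Sum>r\<in>Rs. u (mob (mmul (Bmat m) r) z))"
    by (simp add: hatH_def slash_sum_def slash0_def)
  also have "\<dots> = (\<Sum>r\<in>Rs. u (mob (Xstar_rep n m (mmul (Bmat m) r)) z))"
    using Gamma0_invariant_equiv[OF inv Xstar_rep_Bmat(2)] mdet_Bmat_r Rs assms(2,3) \<open>Im z > 0\<close>
    by (auto intro!: sum.cong)
  also have "\<dots> = (\<Sum>T\<in>Xstar m. u (mob T z))"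
    using bij_betw_Xstar_rep[OF assms(5,3,2)] by (rule sum.reindex_bij_betw)
  finally show "hatH n m Rs u z = slash_sum u (Xstar m) z"
    by (simp add: slash_sum_def)
qed

end
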